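(* Let $n\ge1$ and let $\chi$ be a character of $S_n$. Then $d_\chi^{S_n}(AB)=d_\chi^{S_n}(BA)$ for all $A,B\in\mathbb S_n(\mathbb C)$.
   Context: A character of $S_n$ is a function $g\mapsto\operatorname{tr}(\rho(g))$ for some homomorphism $\rho:S_n\to GL_m(\mathbb C)$, $m\ge1$. $\mathbb S_n(\mathbb C)$ is the set of complex symmetric $n\times n$ matrices. $d_\chi^{S_n}(A)=\sum_{\sigma\in S_n}\chi(\sigma)\prod_{i=1}^n A_{i\,\sigma(i)}$. *)

theory Defs
  imports "Jordan_Normal_Form.Matrix" "HOL-Combinatorics.Permutations" Complex_Main
begin

text \<open>Permutations of S_n are represented as bijections of {0..<n} (identity outside).
  The trace of a square matrix.\<close>
definition mat_trace :: "complex mat \<Rightarrow> complex" where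
  "mat_trace M = (\<Sum>i<dim_row M. M $$ (i, i))"

definition is_character :: "nat \<Rightarrow> ((nat \<Rightarrow> nat) \<Rightarrow> complex) \<Rightarrow> bool" where
  "is_character n \<chi> \<longleftrightarrow>
     (\<exists>m::nat. m \<ge> 1 \<and> (\<exists>\<rho> :: (nat \<Rightarrow> nat) \<Rightarrow> complex mat.
        (\<forall>\<sigma>. \<sigma> permutes {..<n} \<longrightarrow> \<rho> \<sigma> \<in> carrier_mat m m \<and> invertible_mat (\<rho> \<sigma>)) \<and>
        (\<forall>\<sigma> \<tau>. \<sigma> permutes {..<n} \<longrightarrow> \<tau> permutes {..<n} \<longrightarrow> \<rho> (\<sigma> \<circ> \<tau>) = \<rho> \<sigma> * \<rho> \<tau>) \<and>
        (\<forall>\<sigma>. \<sigma> permutes {..<n} \<longrightarrow> \<chi> \<sigma> = mat_trace (\<rho> \<sigma>))))"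

definition immanant :: "nat \<Rightarrow> ((nat \<Rightarrow> nat) \<Rightarrow> complex) \<Rightarrow> complex mat \<Rightarrow> complex" where
  "immanant n \<chi> A = (\<Sum>\<sigma> | \<sigma> permutes {..<n}. \<chi> \<sigma> * (\<Prod>i<n. A $$ (i, \<sigma> i)))"

end

theory Submission
  imports Defs "HOL-Combinatorics.Cycles"
begin

text \<open>Since \<open>B A = (A B)\<^sup>T\<close> for symmetric \<open>A, B\<close>, and transposing a matrix replaces
  \<open>\<sigma>\<close> by \<open>\<sigma>\<inverse>\<close> in the immanant, it suffices that \<open>\<chi>(\<sigma>\<inverse>) = \<chi>(\<sigma>)\<close>. This holds
  because \<open>\<sigma>\<inverse>\<close> is conjugate to \<open>\<sigma>\<close> by an involution \<open>\<tau>\<close>: reversing the list of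
  each cycle of \<open>\<sigma>\<close> reverses its direction. Then
  \<open>\<chi>(\<sigma>\<inverse>) = tr(\<rho>(\<tau>) \<rho>(\<sigma>) \<rho>(\<tau>)) = tr(\<rho>(\<sigma>) \<rho>(\<tau>)\<^sup>2) = \<chi>(\<sigma>)\<close>.\<close>

lemma permutes_disjoint_comp_commute:
  assumes "f permutes S" "g permutes T" "S \<inter> T = {}"
  shows "f \<circ> g = g \<circ> f"
proof
  fix x
  consider "x \<in> S" | "x \<in> T" | "x \<notin> S" "x \<notin> T" by blast
  then show "(f \<circ> g) x = (g \<circ> f) x"
  proof cases
    case 1
    then have "x \<notin> T" "f x \<notin> T"
      using assms(3) permutes_in_image[OF assms(1)] by auto
    then show ?thesis using assms(2) by (simp add: permutes_not_in)
  next
    case 2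
    then have "x \<notin> S" "g x \<notin> S"
      using assms(3) permutes_in_image[OF assms(2)] by auto
    then show ?thesis using assms(1) by (simp add: permutes_not_in)
  qed (use assms in \<open>simp add: permutes_not_in\<close>)
qed

lemma cycle_of_list_append_transpose:
  "cycle_of_list (xs @ [a, b]) = cycle_of_list (xs @ [a]) \<circ> transpose a b"
proof (induction xs)
  case (Cons x ys)
  then show ?case by (cases ys) (simp_all add: comp_assoc)
qed simp

lemma cycle_of_list_rev_comp: "cycle_of_list (rev cs) \<circ> cycle_of_list cs = id"
proof (induction cs rule: cycle_of_list.induct)
  case (1 i j cs)
  have "cycle_of_list (rev (i # j # cs)) \<circ> cycle_of_list (i # j # cs)
     = cycle_of_list (rev (j # cs)) \<circ> (transpose j i \<circ> transpose i j) \<circ> cycle_of_list (j # cs)"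
    using cycle_of_list_append_transpose[of "rev cs" j i] by (simp add: comp_assoc)
  also have "transpose j i \<circ> transpose i j = id"
    by (simp add: transpose_commute)
  finally show ?case using 1 by simp
qed simp_all

definition list_reversal :: "'a list \<Rightarrow> 'a \<Rightarrow> 'a" where
  "list_reversal cs = permutation_of_list (zip cs (rev cs))"

lemma list_reversal_permutes: "distinct cs \<Longrightarrow> list_reversal cs permutes set cs"
  unfolding list_reversal_def by (rule permutation_of_list_permutes) (simp add: list_permutes_def)

lemma list_reversal_nth:
  assumes "distinct cs" "i < length cs"
  shows "list_reversal cs (cs ! i) = rev cs ! i"
  using map_of_zip_nth[of cs "rev cs" i] assms
  by (simp add: list_reversal_def permutation_of_list_def)

lemma map_list_reversal: "distinct cs \<Longrightarrow> map (list_reversal cs) cs = rev cs"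
  by (rule nth_equalityI) (simp_all add: list_reversal_nth)

lemma list_reversal_involution:
  assumes "distinct cs"
  shows "list_reversal cs \<circ> list_reversal cs = id"
proof
  fix x
  show "(list_reversal cs \<circ> list_reversal cs) x = id x"
  proof (cases "x \<in> set cs")
    case True
    then obtain i where i: "i < length cs" "x = cs ! i" by (auto simp: in_set_conv_nth)
    then have "list_reversal cs x = cs ! (length cs - 1 - i)"
      using assms by (simp add: list_reversal_nth rev_nth)
    then show ?thesis
      using assms i by (simp add: list_reversal_nth rev_nth)
  next
    case False
    then show ?thesis
      using permutes_not_in[OF list_reversal_permutes[OF assms]] by simp
  qed
qed

lemma cycle_of_list_reversed_by_list_reversal:
  assumes "distinct cs"
  shows "cycle_of_list cs \<circ> list_reversal cs \<circ> cycle_of_list cs \<circ> list_reversal cs = id"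
proof -
  let ?r = "list_reversal cs" and ?c = "cycle_of_list cs"
  have rr: "?r \<circ> ?r = id" using list_reversal_involution[OF assms] .
  have "?r \<circ> ?c \<circ> ?r = cycle_of_list (rev cs)"
    using conjugation_of_cycle[OF assms o_bij[OF rr rr]]
    by (simp only: inv_unique_comp[OF rr rr] map_list_reversal[OF assms])
  then have "?c \<circ> (?r \<circ> ?c \<circ> ?r) = id"
    using cycle_of_list_rev_comp[of "rev cs"] by simp
  then show ?thesis by (simp add: comp_assoc)
qed

lemma cycle_decomp_permutes: "cycle_decomp I p \<Longrightarrow> p permutes I"
proof (induction rule: cycle_decomp.induct)
  case (comp I p cs)
  then show ?case
    using permutes_compose[OF permutes_subset[OF comp.IH] permutes_subset[OF cycle_permutes]]
    by blast
qed (rule permutes_id)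

lemma cycle_decomp_reversed_by_involution:
  "cycle_decomp I p \<Longrightarrow> \<exists>\<tau>. \<tau> permutes I \<and> \<tau> \<circ> \<tau> = id \<and> p \<circ> \<tau> \<circ> p \<circ> \<tau> = id"
proof (induction rule: cycle_decomp.induct)
  case empty
  show ?case using permutes_id by fastforce
next
  case (comp I p cs)
  then obtain \<tau> where \<tau>: "\<tau> permutes I" "\<tau> \<circ> \<tau> = id" "p \<circ> \<tau> \<circ> p \<circ> \<tau> = id"
    by blast
  let ?r = "list_reversal cs" and ?c = "cycle_of_list cs"
  have r: "?r permutes set cs" using list_reversal_permutes[OF comp(2)] .
  have p: "p permutes I" using cycle_decomp_permutes[OF comp(1)] .
  have c: "?c permutes set cs" by (rule cycle_permutes)
  have rtau: "?r \<circ> \<tau> = \<tau> \<circ> ?r" and ctau: "?c \<circ> \<tau> = \<tau> \<circ> ?c"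
    and rp: "?r \<circ> p = p \<circ> ?r" and cp: "?c \<circ> p = p \<circ> ?c"
    using permutes_disjoint_comp_commute r c \<tau>(1) p comp(3) by blast+
  have "(?c \<circ> p) \<circ> (?r \<circ> \<tau>) \<circ> (?c \<circ> p) \<circ> (?r \<circ> \<tau>)
      = (?c \<circ> ?r \<circ> ?c \<circ> ?r) \<circ> (p \<circ> \<tau> \<circ> p \<circ> \<tau>)"
    by (metis comp_assoc rp cp rtau ctau)
  also have "\<dots> = id"
    using cycle_of_list_reversed_by_list_reversal[OF comp(2)] \<tau>(3) by simp
  finally have "(?c \<circ> p) \<circ> (?r \<circ> \<tau>) \<circ> (?c \<circ> p) \<circ> (?r \<circ> \<tau>) = id" .
  moreover have "?r \<circ> \<tau> \<circ> (?r \<circ> \<tau>) = id"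
    using rtau \<tau>(2) list_reversal_involution[OF comp(2)] by (metis comp_assoc comp_id)
  moreover have "?r \<circ> \<tau> permutes set cs \<union> I"
    using permutes_compose[OF permutes_subset[OF \<tau>(1)] permutes_subset[OF r]] by auto
  ultimately show ?case by blast
qed

lemma permutation_inverse_conjugate_by_involution:
  assumes "\<sigma> permutes S" "finite S"
  obtains \<tau> where "\<tau> permutes S" "\<tau> \<circ> \<tau> = id" "inv_into UNIV \<sigma> = \<tau> \<circ> \<sigma> \<circ> \<tau>"
proof -
  obtain \<tau> where \<tau>: "\<tau> permutes S" "\<tau> \<circ> \<tau> = id" "\<sigma> \<circ> \<tau> \<circ> \<sigma> \<circ> \<tau> = id"
    using cycle_decomp_reversed_by_involution[OF cycle_decomposition[OF assms]] by blast
  have "inv_into UNIV \<sigma> = \<tau> \<circ> \<sigma> \<circ> \<tau>"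
  proof (rule inv_unique_comp)
    show "\<sigma> \<circ> (\<tau> \<circ> \<sigma> \<circ> \<tau>) = id"
      using \<tau>(3) by (simp add: comp_assoc)
    then show "\<tau> \<circ> \<sigma> \<circ> \<tau> \<circ> \<sigma> = id"
      using \<tau>(2) by (metis comp_assoc comp_id)
  qed
  with \<tau>(1,2) show thesis by (rule that)
qed

lemma mat_trace_mult_comm:
  assumes "X \<in> carrier_mat m k" "Y \<in> carrier_mat k m"
  shows "mat_trace (X * Y) = mat_trace (Y * X)"
proof -
  have "mat_trace (X * Y) = (\<Sum>i<m. \<Sum>j<k. X $$ (i, j) * Y $$ (j, i))"
    using assms by (simp add: mat_trace_def scalar_prod_def atLeast0LessThan)
  also have "\<dots> = (\<Sum>j<k. \<Sum>i<m. Y $$ (j, i) * X $$ (i, j))"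
    by (subst sum.swap) (simp add: mult.commute)
  also have "\<dots> = mat_trace (Y * X)"
    using assms by (simp add: mat_trace_def scalar_prod_def atLeast0LessThan)
  finally show ?thesis .
qed

lemma is_character_inverse:
  assumes "is_character n \<chi>" "\<sigma> permutes {..<n}"
  shows "\<chi> (inv_into UNIV \<sigma>) = \<chi> \<sigma>"
proof -
  obtain m \<rho> where carrier: "\<And>\<sigma>. \<sigma> permutes {..<n} \<Longrightarrow> \<rho> \<sigma> \<in> carrier_mat m m"
    and hom: "\<And>\<sigma> \<tau>. \<sigma> permutes {..<n} \<Longrightarrow> \<tau> permutes {..<n} \<Longrightarrow> \<rho> (\<sigma> \<circ> \<tau>) = \<rho> \<sigma> * \<rho> \<tau>"
    and trace: "\<And>\<sigma>. \<sigma> permutes {..<n} \<Longrightarrow> \<chi> \<sigma> = mat_trace (\<rho> \<sigma>)"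
    using assms(1) unfolding is_character_def by blast
  obtain \<tau> where \<tau>: "\<tau> permutes {..<n}" "\<tau> \<circ> \<tau> = id" "inv_into UNIV \<sigma> = \<tau> \<circ> \<sigma> \<circ> \<tau>"
    using permutation_inverse_conjugate_by_involution[OF assms(2)] by blast
  note perms = \<tau>(1) assms(2) permutes_compose[OF \<tau>(1) assms(2)] permutes_id
  have "\<chi> (inv_into UNIV \<sigma>) = mat_trace (\<rho> \<tau> * (\<rho> \<sigma> * \<rho> \<tau>))"
    using trace[OF permutes_inv[OF assms(2)]] hom perms by (simp add: \<tau>(3) comp_assoc)
  also have "\<dots> = mat_trace (\<rho> \<sigma> * \<rho> \<tau> * \<rho> \<tau>)"
    using carrier perms by (intro mat_trace_mult_comm[of _ m m]) (auto intro: mult_carrier_mat)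
  also have "\<rho> \<sigma> * \<rho> \<tau> * \<rho> \<tau> = \<rho> \<sigma> * \<rho> (\<tau> \<circ> \<tau>)"
    using carrier hom perms by (simp add: assoc_mult_mat[of _ m m _ m _ m])
  also have "\<dots> = \<rho> \<sigma>"
    using hom perms by (metis \<tau>(2) comp_id)
  finally show ?thesis using trace[OF assms(2)] by simp
qed

lemma immanant_transpose:
  assumes "A \<in> carrier_mat n n"
    and inverse_invariant: "\<And>\<sigma>. \<sigma> permutes {..<n} \<Longrightarrow> \<chi> (inv_into UNIV \<sigma>) = \<chi> \<sigma>"
  shows "immanant n \<chi> (transpose_mat A) = immanant n \<chi> A"
proof -
  have transposed_diagonal:
    "(\<Prod>i<n. transpose_mat A $$ (i, \<sigma> i)) = (\<Prod>i<n. A $$ (i, inv_into UNIV \<sigma> i))"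
    if \<sigma>: "\<sigma> permutes {..<n}" for \<sigma>
  proof -
    have "(\<Prod>i<n. transpose_mat A $$ (i, \<sigma> i)) = (\<Prod>i<n. A $$ (\<sigma> i, inv_into UNIV \<sigma> (\<sigma> i)))"
      using assms(1) permutes_in_image[OF \<sigma>] permutes_inverses(2)[OF \<sigma>] by (intro prod.cong) auto
    also have "\<dots> = (\<Prod>i<n. A $$ (i, inv_into UNIV \<sigma> i))"
      using prod.reindex_bij_betw[OF permutes_imp_bij[OF \<sigma>], of "\<lambda>j. A $$ (j, inv_into UNIV \<sigma> j)"]
      by simp
    finally show ?thesis .
  qed
  have "immanant n \<chi> (transpose_mat A)
      = (\<Sum>\<sigma> | \<sigma> permutes {..<n}. \<chi> \<sigma> * (\<Prod>i<n. A $$ (i, inv_into UNIV \<sigma> i)))"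
    unfolding immanant_def using transposed_diagonal by (intro sum.cong) auto
  also have "\<dots> = (\<Sum>\<sigma> | \<sigma> permutes {..<n}.
      \<chi> (inv_into UNIV \<sigma>) * (\<Prod>i<n. A $$ (i, inv_into UNIV (inv_into UNIV \<sigma>) i)))"
    by (rule sum_permutations_inverse)
  also have "\<dots> = immanant n \<chi> A"
    unfolding immanant_def using inverse_invariant
    by (intro sum.cong) (auto simp: inv_inv_eq permutes_bij)
  finally show ?thesis .
qed

theorem mainTheorem12:
  fixes n :: nat and \<chi> :: "(nat \<Rightarrow> nat) \<Rightarrow> complex" and A B :: "complex mat"
  assumes "n \<ge> 1"
    and "is_character n \<chi>"
    and "A \<in> carrier_mat n n" and "transpose_mat A = A"
    and "B \<in> carrier_mat n n" and "transpose_mat B = B"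
  shows "immanant n \<chi> (A * B) = immanant n \<chi> (B * A)"
proof -
  have "B * A = transpose_mat (A * B)"
    using transpose_mult[OF assms(3,5)] assms(4,6) by simp
  moreover have "A * B \<in> carrier_mat n n"
    using assms(3,5) by simp
  ultimately show ?thesis
    using immanant_transpose is_character_inverse[OF assms(2)] by simp
qed

end
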